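(* Let $G$ be a mixed graph without directed cycles with maxrank $\Lambda=\Lambda(G)$, and for $i=0,\dots,\Lambda$ let $L_i$ be the set of vertices of inrank $i$. Then $\chi(G)\le\sum_{i=0}^{\Lambda}\chi_{\mathrm u}(G[L_i])$, where $\chi_{\mathrm u}(G[L_i])$ is the chromatic number of the undirected graph $G[L_i]$ (which contains no arcs). Moreover, the bound is tight: for all integers $\ell,k\ge1$ there is a mixed graph $G$ with $\Lambda(G)=\ell$, $\chi_{\mathrm u}(G[L_i])=k$ for every $i\in\{0,\dots,\ell\}$, and $\chi(G)=(\ell+1)k$.
   Context: A mixed graph $G$ consists of a finite vertex set $V(G)$, a set $E(G)$ of undirected edges and a set $A(G)$ of directed arcs; it is simple and contains no directed cycle. A $k$-coloring $c\colon V(G)\to\{1,\dots,k\}$ is proper if $c(u)\neq c(v)$ for every edge $\{u,v\}$ and $c(u)<c(v)$ for every arc $(u,v)$; $\chi(G)$ is the minimum such $k$. The maxrank $\Lambda(G)$ is the number of arcs on a longest directed path in $G$; the inrank of a vertex $v$ is the number of arcs on a longest directed path ending at $v$. $G[L]$ is the mixed subgraph induced by $L$. *)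

theory Defs
  imports Main
begin

definition mixed_graph :: "'a set \<Rightarrow> 'a set set \<Rightarrow> ('a \<times> 'a) set \<Rightarrow> bool" where
  "mixed_graph V E A \<longleftrightarrow>
     finite V \<and> (\<forall>e\<in>E. e \<subseteq> V \<and> card e = 2) \<and> A \<subseteq> V \<times> V \<and>
     (\<forall>(u,v)\<in>A. u \<noteq> v \<and> {u,v} \<notin> E) \<and> acyclic A"

text \<open>Directed path (list of distinct vertices, consecutive ones joined by arcs);
  its number of arcs is length - 1.\<close>

definition dpath :: "'a set \<Rightarrow> ('a \<times> 'a) set \<Rightarrow> 'a list \<Rightarrow> bool" where
  "dpath V A xs \<longleftrightarrow> xs \<noteq> [] \<and> set xs \<subseteq> V \<and> distinct xs \<and>
     (\<forall>i. i + 1 < length xs \<longrightarrow> (xs ! i, xs ! (i + 1)) \<in> A)"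

definition maxrank :: "'a set \<Rightarrow> ('a \<times> 'a) set \<Rightarrow> nat" where
  "maxrank V A = Max {length xs - 1 | xs. dpath V A xs}"

definition inrank :: "'a set \<Rightarrow> ('a \<times> 'a) set \<Rightarrow> 'a \<Rightarrow> nat" where
  "inrank V A v = Max {length xs - 1 | xs. dpath V A xs \<and> last xs = v}"

definition layer :: "'a set \<Rightarrow> ('a \<times> 'a) set \<Rightarrow> nat \<Rightarrow> 'a set" where
  "layer V A i = {v \<in> V. inrank V A v = i}"

definition proper_coloring ::
  "'a set \<Rightarrow> 'a set set \<Rightarrow> ('a \<times> 'a) set \<Rightarrow> nat \<Rightarrow> ('a \<Rightarrow> nat) \<Rightarrow> bool" where
  "proper_coloring V E A k c \<longleftrightarrow>
     (\<forall>v\<in>V. c v \<in> {1..k}) \<and>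
     (\<forall>e\<in>E. \<forall>u\<in>e. \<forall>v\<in>e. u \<noteq> v \<longrightarrow> c u \<noteq> c v) \<and>
     (\<forall>(u,v)\<in>A. c u < c v)"

definition chi :: "'a set \<Rightarrow> 'a set set \<Rightarrow> ('a \<times> 'a) set \<Rightarrow> nat" where
  "chi V E A = (LEAST k. \<exists>c. proper_coloring V E A k c)"

definition chi_u :: "'a set \<Rightarrow> 'a set set \<Rightarrow> nat" where
  "chi_u V E = (LEAST k. \<exists>c. (\<forall>v\<in>V. c v \<in> {1..k}) \<and>
                  (\<forall>e\<in>E. \<forall>u\<in>e. \<forall>v\<in>e. u \<noteq> v \<longrightarrow> c u \<noteq> (c v :: nat)))"

definition induced_edges :: "'a set set \<Rightarrow> 'a set \<Rightarrow> 'a set set" where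
  "induced_edges E L = {e \<in> E. e \<subseteq> L}"

end

theory Submission
  imports Defs
begin

(* Upper bound: colour the layers one after another, giving layer L_i a block of chi_u(G[L_i])
   fresh colours placed above the blocks used for L_0, ..., L_(i-1), and colouring G[L_i] optimally
   inside its block.  Edges inside a layer are then properly coloured, edges between layers get
   colours from disjoint blocks, and arcs are respected because inrank strictly increases along
   every arc of an acyclic mixed graph.

   Tightness: take l + 1 disjoint cliques K_k and an arc from every vertex of the i-th clique to
   every vertex of the (i+1)-th (below, vertex v lies in clique v div k).  The inrank of a vertex is
   the index of its clique, so the layers are the cliques.  In a proper colouring the k distinct
   colours of clique i + 1 all exceed the largest colour of clique i, which is at least (i + 1) k
   by induction; hence at least (l + 1) k colours are needed. *)

definition proper_ucoloring :: "'a set \<Rightarrow> 'a set set \<Rightarrow> nat \<Rightarrow> ('a \<Rightarrow> nat) \<Rightarrow> bool" where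
  "proper_ucoloring V E k c \<longleftrightarrow>
     (\<forall>v\<in>V. c v \<in> {1..k}) \<and> (\<forall>e\<in>E. \<forall>u\<in>e. \<forall>v\<in>e. u \<noteq> v \<longrightarrow> c u \<noteq> c v)"

lemma chi_u_eq_Least: "chi_u V E = (LEAST k. \<exists>c. proper_ucoloring V E k c)"
  by (simp add: chi_u_def proper_ucoloring_def)

lemma proper_coloring_iff:
  "proper_coloring V E A k c \<longleftrightarrow> proper_ucoloring V E k c \<and> (\<forall>(u, v)\<in>A. c u < c v)"
  unfolding proper_coloring_def proper_ucoloring_def by simp

lemma proper_coloring_range: "proper_coloring V E A k c \<Longrightarrow> v \<in> V \<Longrightarrow> c v \<in> {1..k}"
  unfolding proper_coloring_def by simp

lemma proper_coloring_arc: "proper_coloring V E A k c \<Longrightarrow> (u, v) \<in> A \<Longrightarrow> c u < c v"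
  unfolding proper_coloring_def by fast

lemma chi_u_le: "proper_ucoloring V E k c \<Longrightarrow> chi_u V E \<le> k"
  unfolding chi_u_eq_Least by (rule Least_le) blast

lemma ex_proper_ucoloring_chi_u:
  "proper_ucoloring V E k c \<Longrightarrow> \<exists>c. proper_ucoloring V E (chi_u V E) c"
  unfolding chi_u_eq_Least by (rule LeastI_ex) blast

lemma chi_le: "proper_coloring V E A k c \<Longrightarrow> chi V E A \<le> k"
  unfolding chi_def by (rule Least_le) blast

lemma ex_proper_coloring_chi:
  "proper_coloring V E A k c \<Longrightarrow> \<exists>c. proper_coloring V E A (chi V E A) c"
  unfolding chi_def by (rule LeastI_ex) blast

lemma ex_proper_ucoloring_card:
  assumes "finite V" and "\<forall>e\<in>E. e \<subseteq> V"
  shows "\<exists>c. proper_ucoloring V E (card V) c"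
proof -
  obtain h where h: "bij_betw h V {0..<card V}"
    using ex_bij_betw_finite_nat[OF assms(1)] by blast
  have "proper_ucoloring V E (card V) (\<lambda>v. h v + 1)"
    unfolding proper_ucoloring_def
  proof (intro conjI ballI impI)
    fix v assume "v \<in> V"
    then show "h v + 1 \<in> {1..card V}" using bij_betw_apply[OF h] by fastforce
  next
    fix e u v assume "e \<in> E" "u \<in> e" "v \<in> e" "u \<noteq> v"
    moreover from this have "u \<in> V" "v \<in> V" using assms(2) by auto
    ultimately show "h u + 1 \<noteq> h v + 1"
      using inj_onD[OF bij_betw_imp_inj_on[OF h]] by fastforce
  qed
  then show ?thesis by blast
qed

lemma ex_proper_ucoloring_chi_u_finite:
  assumes "finite V" and "\<forall>e\<in>E. e \<subseteq> V"
  shows "\<exists>c. proper_ucoloring V E (chi_u V E) c"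
proof -
  obtain c where "proper_ucoloring V E (card V) c" using ex_proper_ucoloring_card[OF assms] by blast
  then show ?thesis by (rule ex_proper_ucoloring_chi_u)
qed

lemma ex_proper_ucoloring_chi_u_induced:
  "finite L \<Longrightarrow> \<exists>c. proper_ucoloring L (induced_edges E L) (chi_u L (induced_edges E L)) c"
  by (rule ex_proper_ucoloring_chi_u_finite) (simp_all add: induced_edges_def)

lemma proper_ucoloring_inj_on_clique:
  assumes "proper_ucoloring V E k c" and "\<forall>u\<in>L. \<forall>v\<in>L. u \<noteq> v \<longrightarrow> {u, v} \<in> E"
  shows "inj_on c L"
proof (rule inj_onI, rule ccontr)
  fix u v assume "u \<in> L" "v \<in> L" "c u = c v" "u \<noteq> v"
  moreover from this have "{u, v} \<in> E" using assms(2) by blast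
  ultimately show False using assms(1) unfolding proper_ucoloring_def by fastforce
qed

lemma chi_u_complete:
  assumes "finite V" and "\<forall>e\<in>E. e \<subseteq> V" and "\<forall>u\<in>V. \<forall>v\<in>V. u \<noteq> v \<longrightarrow> {u, v} \<in> E"
  shows "chi_u V E = card V"
proof (rule antisym)
  show "chi_u V E \<le> card V"
    using ex_proper_ucoloring_card[OF assms(1,2)] chi_u_le by blast
  obtain c where c: "proper_ucoloring V E (chi_u V E) c"
    using ex_proper_ucoloring_chi_u_finite[OF assms(1,2)] by blast
  then have "c ` V \<subseteq> {1..chi_u V E}" unfolding proper_ucoloring_def by blast
  with proper_ucoloring_inj_on_clique[OF c assms(3)] show "card V \<le> chi_u V E"
    using card_inj_on_le[of c V "{1..chi_u V E}"] by simp
qed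

lemma dpath_singleton: "v \<in> V \<Longrightarrow> dpath V A [v]"
  unfolding dpath_def by simp

lemma dpath_snoc:
  assumes "dpath V A xs" and "v \<in> V" and "v \<notin> set xs" and "(last xs, v) \<in> A"
  shows "dpath V A (xs @ [v])"
  unfolding dpath_def
proof (intro conjI allI impI)
  fix i assume i: "i + 1 < length (xs @ [v])"
  show "((xs @ [v]) ! i, (xs @ [v]) ! (i + 1)) \<in> A"
  proof (cases "i + 1 < length xs")
    case True
    then show ?thesis using assms(1) by (simp add: dpath_def nth_append)
  next
    case False
    with i have "i = length xs - 1" "xs \<noteq> []" by auto
    then show ?thesis using assms(4) by (simp add: nth_append last_conv_nth)
  qed
qed (use assms in \<open>auto simp: dpath_def\<close>)

lemma dpath_nth_rtrancl:
  assumes "dpath V A xs" and "i \<le> j" and "j < length xs"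
  shows "(xs ! i, xs ! j) \<in> A\<^sup>*"
  using assms(2,3)
proof (induction j)
  case (Suc j)
  show ?case
  proof (cases "i = Suc j")
    case False
    with Suc have "(xs ! i, xs ! j) \<in> A\<^sup>*" by simp
    moreover have "(xs ! j, xs ! Suc j) \<in> A" using assms(1) Suc.prems by (simp add: dpath_def)
    ultimately show ?thesis ..
  qed simp
qed simp

lemma dpath_rtrancl_last:
  assumes "dpath V A xs" and "x \<in> set xs"
  shows "(x, last xs) \<in> A\<^sup>*"
proof -
  obtain i where "i < length xs" "x = xs ! i" using assms(2) by (auto simp: in_set_conv_nth)
  moreover have "xs \<noteq> []" using assms(1) by (simp add: dpath_def)
  ultimately show ?thesis
    using dpath_nth_rtrancl[OF assms(1), of i "length xs - 1"] by (simp add: last_conv_nth)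
qed

lemma dpath_length_le_card: "finite V \<Longrightarrow> dpath V A xs \<Longrightarrow> length xs \<le> card V"
  unfolding dpath_def by (metis card_mono distinct_card)

lemma finite_dpath_lengths:
  "finite V \<Longrightarrow> finite {length xs - 1 | xs. dpath V A xs \<and> P xs}"
  by (rule finite_subset[of _ "{..card V}"]) (auto dest: dpath_length_le_card)

lemma dpath_length_le_inrank:
  "finite V \<Longrightarrow> dpath V A xs \<Longrightarrow> length xs - 1 \<le> inrank V A (last xs)"
  unfolding inrank_def by (rule Max_ge[OF finite_dpath_lengths]) auto

lemma dpath_length_le_maxrank:
  "finite V \<Longrightarrow> dpath V A xs \<Longrightarrow> length xs - 1 \<le> maxrank V A"
  unfolding maxrank_def using finite_dpath_lengths[of V A "\<lambda>_. True"] by (intro Max_ge) auto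

lemma ex_dpath_inrank:
  assumes "finite V" and "v \<in> V"
  shows "\<exists>xs. dpath V A xs \<and> last xs = v \<and> length xs - 1 = inrank V A v"
proof -
  have "{length xs - 1 | xs. dpath V A xs \<and> last xs = v} \<noteq> {}"
    using dpath_singleton[OF assms(2)] by force
  from Max_in[OF finite_dpath_lengths[OF assms(1)] this] show ?thesis
    unfolding inrank_def by force
qed

lemma inrank_le_maxrank: "finite V \<Longrightarrow> v \<in> V \<Longrightarrow> inrank V A v \<le> maxrank V A"
  by (metis ex_dpath_inrank dpath_length_le_maxrank)

lemma maxrank_eq_Max_inrank:
  assumes "finite V" and "V \<noteq> {}"
  shows "maxrank V A = Max (inrank V A ` V)"
proof (rule antisym)
  have fin: "finite {length xs - 1 | xs. dpath V A xs}"
    using finite_dpath_lengths[of V A "\<lambda>_. True"] assms(1) by simp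
  obtain v where "v \<in> V" using assms(2) by blast
  then have ne: "{length xs - 1 | xs. dpath V A xs} \<noteq> {}"
    using dpath_singleton[of v V A] by force
  show "maxrank V A \<le> Max (inrank V A ` V)"
    unfolding maxrank_def
  proof (rule Max.boundedI[OF fin ne])
    fix n assume "n \<in> {length xs - 1 | xs. dpath V A xs}"
    then obtain xs where xs: "dpath V A xs" "n = length xs - 1" by blast
    then have "last xs \<in> V" by (auto simp: dpath_def)
    then have "inrank V A (last xs) \<le> Max (inrank V A ` V)"
      using assms(1) by (intro Max_ge) auto
    with dpath_length_le_inrank[OF assms(1) xs(1)] xs(2) show "n \<le> Max (inrank V A ` V)"
      by linarith
  qed
  show "Max (inrank V A ` V) \<le> maxrank V A"
    using assms by (simp add: Max_le_iff inrank_le_maxrank)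
qed

lemma inrank_less_of_arc:
  assumes "finite V" and "A \<subseteq> V \<times> V" and "acyclic A" and uv: "(u, v) \<in> A"
  shows "inrank V A u < inrank V A v"
proof -
  have "u \<in> V" "v \<in> V" using uv assms(2) by auto
  obtain xs where xs: "dpath V A xs" "last xs = u" "length xs - 1 = inrank V A u"
    using ex_dpath_inrank[OF assms(1) \<open>u \<in> V\<close>] by blast
  have "v \<notin> set xs"
  proof
    assume "v \<in> set xs"
    then have "(v, u) \<in> A\<^sup>*" using dpath_rtrancl_last[OF xs(1)] xs(2) by blast
    with uv have "(u, u) \<in> A\<^sup>+" by (rule rtrancl_into_trancl2)
    with assms(3) show False unfolding acyclic_def by blast
  qed
  then have "dpath V A (xs @ [v])" using dpath_snoc[OF xs(1) \<open>v \<in> V\<close>] xs(2) uv by blast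
  from dpath_length_le_inrank[OF assms(1) this] have "length xs \<le> inrank V A v" by simp
  moreover have "length xs > 0" using xs(1) by (simp add: dpath_def)
  ultimately show ?thesis using xs(3) by linarith
qed

lemma rank_less_of_trancl:
  fixes r :: "'a \<Rightarrow> nat"
  assumes "\<forall>(u, v)\<in>A. r u < r v" and "(x, y) \<in> A\<^sup>+"
  shows "r x < r y"
  using assms(2) by induction (use assms(1) in \<open>fastforce+\<close>)

lemma dpath_length_le_rank:
  fixes r :: "'a \<Rightarrow> nat"
  assumes "\<forall>(u, v)\<in>A. r u < r v" and "dpath V A xs"
  shows "length xs - 1 \<le> r (last xs)"
proof -
  have "i \<le> r (xs ! i)" if "i < length xs" for i
    using that
  proof (induction i)
    case (Suc i)
    then have "(xs ! i, xs ! Suc i) \<in> A" using assms(2) by (simp add: dpath_def)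
    with Suc assms(1) show ?case by fastforce
  qed simp
  moreover have "xs \<noteq> []" using assms(2) by (simp add: dpath_def)
  ultimately show ?thesis by (simp add: last_conv_nth)
qed

lemma inrank_eq_rank:
  fixes r :: "'a \<Rightarrow> nat"
  assumes "finite V" and "A \<subseteq> V \<times> V" and incr: "\<forall>(u, v)\<in>A. r u < r v"
    and pred: "\<forall>v\<in>V. 0 < r v \<longrightarrow> (\<exists>u. (u, v) \<in> A \<and> r u + 1 = r v)"
    and "v \<in> V"
  shows "inrank V A v = r v"
proof (rule antisym)
  show "inrank V A v \<le> r v"
    using ex_dpath_inrank[OF assms(1,5)] dpath_length_le_rank[OF incr] by metis
  have "\<exists>xs. dpath V A xs \<and> last xs = v \<and> length xs = Suc n" if "v \<in> V" "r v = n" for v n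
    using that
  proof (induction n arbitrary: v)
    case 0
    then show ?case using dpath_singleton by fastforce
  next
    case (Suc n)
    then obtain u where u: "(u, v) \<in> A" "r u = n" using pred by fastforce
    with assms(2) Suc.IH obtain xs where xs: "dpath V A xs" "last xs = u" "length xs = Suc n"
      by blast
    have "v \<notin> set xs"
    proof
      assume "v \<in> set xs"
      then have "(v, u) \<in> A\<^sup>*" using dpath_rtrancl_last[OF xs(1)] xs(2) by blast
      then have "v = u \<or> (v, u) \<in> A\<^sup>+" by (auto dest: rtranclD)
      then have "r v \<le> r u" using rank_less_of_trancl[OF incr] by fastforce
      with u Suc.prems show False by simp
    qed
    with xs u Suc.prems have "dpath V A (xs @ [v])" by (auto intro: dpath_snoc)
    with xs show ?case by fastforce
  qed
  then show "r v \<le> inrank V A v"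
    using dpath_length_le_inrank[OF assms(1)] assms(5) by fastforce
qed

lemma ex_proper_coloring_sum_layers:
  fixes r :: "'a \<Rightarrow> nat"
  assumes "finite V" and edges: "\<forall>e\<in>E. e \<subseteq> V \<and> card e = 2" and "A \<subseteq> V \<times> V"
    and incr: "\<forall>(u, v)\<in>A. r u < r v" and bounded: "\<forall>v\<in>V. r v \<le> m"
  shows "\<exists>c. proper_coloring V E A
           (\<Sum>i = 0..m. chi_u {v \<in> V. r v = i} (induced_edges E {v \<in> V. r v = i})) c"
proof -
  define L where "L i = {v \<in> V. r v = i}" for i
  define K where "K i = chi_u (L i) (induced_edges E (L i))" for i
  have "\<exists>c. proper_ucoloring (L i) (induced_edges E (L i)) (K i) c" for i
    unfolding K_def by (rule ex_proper_ucoloring_chi_u_induced) (simp add: L_def assms(1))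
  then obtain C where C: "\<And>i. proper_ucoloring (L i) (induced_edges E (L i)) (K i) (C i)"
    by metis
  define S where "S i = (\<Sum>j<i. K j)" for i
  define c where "c v = S (r v) + C (r v) v" for v
  have c_range: "S (r v) < c v \<and> c v \<le> S (Suc (r v))" if "v \<in> V" for v
    using C[of "r v"] that by (auto simp: c_def S_def L_def proper_ucoloring_def)
  have S_mono: "i \<le> j \<Longrightarrow> S i \<le> S j" for i j
    unfolding S_def by (rule sum_mono2) auto
  have c_less: "c u < c v" if "u \<in> V" "v \<in> V" "r u < r v" for u v
    using c_range[OF that(1)] c_range[OF that(2)] S_mono[of "Suc (r u)" "r v"] that(3) by linarith
  have "proper_coloring V E A (S (Suc m)) c"
    unfolding proper_coloring_def
  proof (intro conjI ballI impI)
    fix v assume "v \<in> V"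
    then show "c v \<in> {1..S (Suc m)}"
      using c_range[of v] S_mono[of "Suc (r v)" "Suc m"] bounded by fastforce
  next
    fix e u v assume e: "e \<in> E" "u \<in> e" "v \<in> e" "u \<noteq> v"
    then have "e = {u, v}" and "u \<in> V" "v \<in> V"
      using edges by (auto simp: card_2_iff)
    show "c u \<noteq> c v"
    proof (cases "r u = r v")
      case True
      with e \<open>e = {u, v}\<close> \<open>u \<in> V\<close> \<open>v \<in> V\<close> have "e \<in> induced_edges E (L (r u))"
        by (auto simp: induced_edges_def L_def)
      with C[of "r u"] e True show ?thesis by (auto simp: c_def proper_ucoloring_def)
    next
      case False
      with c_less \<open>u \<in> V\<close> \<open>v \<in> V\<close> show ?thesis by (metis linorder_neq_iff less_irrefl)
    qed
  next
    fix a assume "a \<in> A"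
    then obtain u v where "a = (u, v)" "u \<in> V" "v \<in> V" "r u < r v"
      using assms(3) incr by (cases a) auto
    with c_less show "case a of (u, v) \<Rightarrow> c u < c v" by simp
  qed
  moreover have "S (Suc m) = (\<Sum>i = 0..m. K i)"
    by (simp add: S_def atLeast0AtMost lessThan_Suc_atMost)
  ultimately have "proper_coloring V E A (\<Sum>i = 0..m. K i) c" by simp
  then show ?thesis unfolding K_def L_def by blast
qed

lemma ex_proper_coloring_sum_chi_u_layers:
  assumes "mixed_graph V E A"
  shows "\<exists>c. proper_coloring V E A
           (\<Sum>i = 0..maxrank V A. chi_u (layer V A i) (induced_edges E (layer V A i))) c"
proof -
  have "finite V" "\<forall>e\<in>E. e \<subseteq> V \<and> card e = 2" "A \<subseteq> V \<times> V" "acyclic A"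
    using assms by (auto simp: mixed_graph_def)
  then show ?thesis
    unfolding layer_def
    by (intro ex_proper_coloring_sum_layers) (auto intro: inrank_less_of_arc inrank_le_maxrank)
qed

lemma add_card_le_Suc_Max:
  fixes S :: "nat set"
  assumes "finite S" and "S \<noteq> {}" and "\<forall>x\<in>S. m \<le> x"
  shows "m + card S \<le> Suc (Max S)"
proof -
  have "S \<subseteq> {m..Max S}" using assms by auto
  then have "card S \<le> Suc (Max S) - m" using card_mono[of "{m..Max S}" S] by simp
  moreover have "m \<le> Max S" using assms by auto
  ultimately show ?thesis by linarith
qed

lemma div_eq_iff_mult_le_less:
  fixes v k :: nat
  assumes "0 < k"
  shows "v div k = i \<longleftrightarrow> i * k \<le> v \<and> v < i * k + k"
proof
  assume "v div k = i"
  then have "v = i * k + v mod k" using div_mult_mod_eq[of v k] by simp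
  moreover have "v mod k < k" using assms by simp
  ultimately show "i * k \<le> v \<and> v < i * k + k" by linarith
qed (auto intro: div_nat_eqI simp: mult.commute)

locale layered_cliques =
  fixes l k :: nat
  assumes k_pos: "0 < k"
begin

abbreviation block :: "nat \<Rightarrow> nat set" where
  "block i \<equiv> {i * k..<i * k + k}"

definition vertices :: "nat set" where
  "vertices = {..<(l + 1) * k}"

definition edges :: "nat set set" where
  "edges = {{u, v} | u v. u \<in> vertices \<and> v \<in> vertices \<and> u \<noteq> v \<and> u div k = v div k}"

definition arcs :: "(nat \<times> nat) set" where
  "arcs = {(u, v). u \<in> vertices \<and> v \<in> vertices \<and> v div k = u div k + 1}"

lemma vertex_div_le: "v \<in> vertices \<Longrightarrow> v div k \<le> l"
  unfolding vertices_def using less_mult_imp_div_less[of v "l + 1" k] by simp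

lemma block_eq: "i \<le> l \<Longrightarrow> {v \<in> vertices. v div k = i} = block i"
proof (intro set_eqI iffI)
  fix v assume "v \<in> {v \<in> vertices. v div k = i}"
  then show "v \<in> block i" using div_eq_iff_mult_le_less[OF k_pos] by simp
next
  fix v assume "i \<le> l" and v: "v \<in> block i"
  then have "i * k + k \<le> (l + 1) * k" by simp
  moreover have "v < i * k + k" using v by simp
  ultimately have "v < (l + 1) * k" by linarith
  with v show "v \<in> {v \<in> vertices. v div k = i}"
    unfolding vertices_def using div_eq_iff_mult_le_less[OF k_pos] by simp
qed

lemma arcs_div_less: "\<forall>(u, v)\<in>arcs. u div k < v div k"
  unfolding arcs_def by auto

lemma mixed_graph_layered: "mixed_graph vertices edges arcs"
  unfolding mixed_graph_def
proof (intro conjI)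
  show "finite vertices" unfolding vertices_def by simp
  show "\<forall>e\<in>edges. e \<subseteq> vertices \<and> card e = 2" unfolding edges_def by auto
  show "arcs \<subseteq> vertices \<times> vertices" unfolding arcs_def by auto
  show "\<forall>(u, v)\<in>arcs. u \<noteq> v \<and> {u, v} \<notin> edges"
    unfolding arcs_def edges_def by (auto simp: doubleton_eq_iff)
  show "acyclic arcs"
    unfolding acyclic_def using rank_less_of_trancl[OF arcs_div_less] by blast
qed

lemma inrank_eq: "v \<in> vertices \<Longrightarrow> inrank vertices arcs v = v div k"
proof (rule inrank_eq_rank[OF _ _ arcs_div_less])
  show "\<forall>v\<in>vertices. 0 < v div k \<longrightarrow> (\<exists>u. (u, v) \<in> arcs \<and> u div k + 1 = v div k)"
  proof (intro ballI impI)
    fix v assume "v \<in> vertices" "0 < v div k"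
    then have "k \<le> v" using div_less not_le by fastforce
    then have "(v - k) div k + 1 = v div k" using le_div_geq[OF k_pos] by simp
    with \<open>v \<in> vertices\<close> have "(v - k, v) \<in> arcs" unfolding arcs_def vertices_def by auto
    with \<open>(v - k) div k + 1 = v div k\<close> show "\<exists>u. (u, v) \<in> arcs \<and> u div k + 1 = v div k" by blast
  qed
qed (use mixed_graph_layered in \<open>auto simp: mixed_graph_def\<close>)

lemma layer_eq: "i \<le> l \<Longrightarrow> layer vertices arcs i = block i"
  using block_eq by (simp add: layer_def inrank_eq cong: conj_cong)

lemma maxrank_eq: "maxrank vertices arcs = l"
proof (rule antisym)
  have lk: "l * k \<in> vertices" and fin: "finite vertices"
    unfolding vertices_def using k_pos by simp_all
  then have ne: "vertices \<noteq> {}" by blast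
  have "l = inrank vertices arcs (l * k)" using inrank_eq[OF lk] k_pos by simp
  also have "\<dots> \<le> maxrank vertices arcs" using inrank_le_maxrank[OF fin lk] .
  finally show "l \<le> maxrank vertices arcs" .
  have "maxrank vertices arcs = Max (inrank vertices arcs ` vertices)"
    using maxrank_eq_Max_inrank[OF fin ne] .
  also have "\<dots> \<le> l" using fin ne by (simp add: inrank_eq vertex_div_le)
  finally show "maxrank vertices arcs \<le> l" .
qed

lemma block_clique:
  assumes "i \<le> l" and "u \<in> block i" and "v \<in> block i" and "u \<noteq> v"
  shows "{u, v} \<in> edges"
proof -
  have "u \<in> vertices \<and> u div k = i" "v \<in> vertices \<and> v div k = i"
    using assms(2,3) block_eq[OF assms(1)] by blast+
  with assms(4) show ?thesis unfolding edges_def by blast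
qed

lemma chi_u_layer_eq:
  assumes "i \<le> l"
  shows "chi_u (layer vertices arcs i) (induced_edges edges (layer vertices arcs i)) = k"
  using chi_u_complete[of "layer vertices arcs i" "induced_edges edges (layer vertices arcs i)"]
    block_clique[OF assms] by (simp add: layer_eq[OF assms] induced_edges_def)

lemma block_color_ge:
  assumes c: "proper_coloring vertices edges arcs y c" and "i \<le> l"
    and above: "\<forall>v\<in>block i. m \<le> c v"
  shows "\<exists>w\<in>block i. m + k \<le> Suc (c w)"
proof -
  let ?B = "block i"
  have "proper_ucoloring vertices edges y c" using c by (simp add: proper_coloring_iff)
  then have "inj_on c ?B"
    by (rule proper_ucoloring_inj_on_clique) (use block_clique[OF assms(2)] in blast)
  then have "card (c ` ?B) = k" by (simp add: card_image)
  have fin: "finite (c ` ?B)" and ne: "c ` ?B \<noteq> {}" using k_pos by auto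
  have "m + card (c ` ?B) \<le> Suc (Max (c ` ?B))"
    by (rule add_card_le_Suc_Max[OF fin ne]) (use above in blast)
  moreover obtain w where "w \<in> ?B" "c w = Max (c ` ?B)"
    using Max_in[OF fin ne] by (metis imageE)
  ultimately show ?thesis using \<open>card (c ` ?B) = k\<close> by force
qed

lemma block_colors_gt:
  assumes c: "proper_coloring vertices edges arcs y c" and "i \<le> l"
  shows "\<forall>v\<in>block i. i * k < c v"
  using assms(2)
proof (induction i)
  case 0
  show ?case
  proof
    fix v assume "v \<in> block 0"
    then have "v \<in> vertices" using block_eq[of 0] by blast
    with proper_coloring_range[OF c] show "0 * k < c v" by fastforce
  qed
next
  case (Suc i)
  then have "i \<le> l" by simp
  with Suc.IH have "\<forall>v\<in>block i. Suc (i * k) \<le> c v" by (simp add: Suc_le_eq)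
  then have "\<exists>w\<in>block i. Suc (i * k) + k \<le> Suc (c w)"
    by (rule block_color_ge[OF c \<open>i \<le> l\<close>])
  then obtain w where w: "w \<in> block i" "i * k + k \<le> c w" by auto
  show ?case
  proof
    fix v assume v: "v \<in> block (Suc i)"
    have "w \<in> vertices" "w div k = i"
      using w(1) block_eq[OF \<open>i \<le> l\<close>] by blast+
    moreover have "v \<in> vertices" "v div k = Suc i"
      using v block_eq[OF Suc.prems] by blast+
    ultimately have "(w, v) \<in> arcs" unfolding arcs_def by simp
    then have "c w < c v" by (rule proper_coloring_arc[OF c])
    with w(2) show "Suc i * k < c v" by simp
  qed
qed

lemma proper_coloring_colors_ge: "proper_coloring vertices edges arcs y c \<Longrightarrow> (l + 1) * k \<le> y"
proof -
  assume c: "proper_coloring vertices edges arcs y c"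
  have "\<forall>v\<in>block l. Suc (l * k) \<le> c v"
    using block_colors_gt[OF c order_refl] by (simp add: Suc_le_eq)
  then have "\<exists>w\<in>block l. Suc (l * k) + k \<le> Suc (c w)"
    by (rule block_color_ge[OF c order_refl])
  then obtain w where w: "w \<in> block l" "l * k + k \<le> c w" by auto
  then have "w \<in> vertices" using block_eq[of l] by blast
  then have "c w \<in> {1..y}" by (rule proper_coloring_range[OF c])
  with w(2) show ?thesis by simp
qed

lemma chi_eq: "chi vertices edges arcs = (l + 1) * k"
proof -
  have "(\<Sum>i = 0..maxrank vertices arcs.
          chi_u (layer vertices arcs i) (induced_edges edges (layer vertices arcs i)))
        = (l + 1) * k"
    by (simp add: maxrank_eq chi_u_layer_eq)
  with ex_proper_coloring_sum_chi_u_layers[OF mixed_graph_layered]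
  obtain c where c: "proper_coloring vertices edges arcs ((l + 1) * k) c" by metis
  obtain c' where "proper_coloring vertices edges arcs (chi vertices edges arcs) c'"
    using ex_proper_coloring_chi[OF c] by blast
  then have "(l + 1) * k \<le> chi vertices edges arcs" by (rule proper_coloring_colors_ge)
  with chi_le[OF c] show ?thesis by (rule antisym)
qed

end

theorem mainTheorem9:
  fixes V :: "'a set" and E :: "'a set set" and A :: "('a \<times> 'a) set"
  assumes "mixed_graph V E A"
  shows "chi V E A \<le>
           (\<Sum>i = 0..maxrank V A. chi_u (layer V A i) (induced_edges E (layer V A i))) \<and>
         (\<forall>l k :: nat. l \<ge> 1 \<and> k \<ge> 1 \<longrightarrow>
           (\<exists>(V' :: nat set) E' A'. mixed_graph V' E' A' \<and> maxrank V' A' = l \<and>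
              (\<forall>i \<in> {0..l}. chi_u (layer V' A' i) (induced_edges E' (layer V' A' i)) = k) \<and>
              chi V' E' A' = (l + 1) * k))"
proof (intro conjI allI impI)
  show "chi V E A \<le>
          (\<Sum>i = 0..maxrank V A. chi_u (layer V A i) (induced_edges E (layer V A i)))"
    using ex_proper_coloring_sum_chi_u_layers[OF assms] chi_le by blast
next
  fix l k :: nat
  assume "l \<ge> 1 \<and> k \<ge> 1"
  then interpret layered_cliques l k by unfold_locales simp
  show "\<exists>(V' :: nat set) E' A'. mixed_graph V' E' A' \<and> maxrank V' A' = l \<and>
          (\<forall>i \<in> {0..l}. chi_u (layer V' A' i) (induced_edges E' (layer V' A' i)) = k) \<and>
          chi V' E' A' = (l + 1) * k"
    using mixed_graph_layered maxrank_eq chi_u_layer_eq chi_eq by (intro exI) auto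
qed

end
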